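(* Let $\{1/N,\rho_x\}_{x=1}^N$ be an ensemble of density operators on a finite-dimensional Hilbert space given with equal prior probabilities $1/N$, and let $K$, $\{r_x,\sigma_x\}$, $\{M_x\}$ be a symmetry operator, complementary states and POVM, i.e. $K$ Hermitian, $r_x\ge 0$, $\sigma_x$ density operators, $\{M_x\}$ a POVM, with $K=\frac1N\rho_x+r_x\sigma_x$ and $r_x\mathrm{tr}[M_x\sigma_x]=0$ for all $x$. Then all $r_x$ are equal to a common value $r$, and $$P_{\mathrm{guess}}=\frac1N+r,$$ where $r=\dfrac{\|\frac1N\rho_x-\frac1N\rho_y\|_1}{\|\sigma_x-\sigma_y\|_1}$ for any $x,y$ with $\sigma_x\ne\sigma_y$.
   Context: $P_{\mathrm{guess}}=\max_{\{M_x\}}\sum_x \frac1N\mathrm{tr}[M_x\rho_x]$ over POVMs (positive semidefinite operators summing to the identity). $\|\cdot\|_1$ is the trace norm. *)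

theory Defs
  imports "Jordan_Normal_Form.Matrix" Complex_Main
begin

text \<open>Operators on the Hilbert space C^d are d x d complex matrices.\<close>

definition mtrace :: "complex mat \<Rightarrow> complex" where
  "mtrace A = (\<Sum>i<dim_row A. A $$ (i,i))"

definition adj :: "complex mat \<Rightarrow> complex mat" where
  "adj A = mat (dim_col A) (dim_row A) (\<lambda>(i,j). cnj (A $$ (j,i)))"

definition hermitian :: "nat \<Rightarrow> complex mat \<Rightarrow> bool" where
  "hermitian d A \<longleftrightarrow> A \<in> carrier_mat d d \<and> adj A = A"

definition psd :: "nat \<Rightarrow> complex mat \<Rightarrow> bool" where
  "psd d A \<longleftrightarrow> hermitian d A \<and>
     (\<forall>v \<in> carrier_vec d. Re ((A *\<^sub>v v) \<bullet>c v) \<ge> 0)"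

definition density :: "nat \<Rightarrow> complex mat \<Rightarrow> bool" where
  "density d \<rho> \<longleftrightarrow> psd d \<rho> \<and> mtrace \<rho> = 1"

definition msum :: "nat \<Rightarrow> ('i \<Rightarrow> complex mat) \<Rightarrow> 'i set \<Rightarrow> complex mat" where
  "msum d A S = mat d d (\<lambda>ij. \<Sum>x\<in>S. A x $$ ij)"

definition povm :: "nat \<Rightarrow> nat \<Rightarrow> (nat \<Rightarrow> complex mat) \<Rightarrow> bool" where
  "povm d N M \<longleftrightarrow> (\<forall>x<N. psd d (M x)) \<and> msum d M {..<N} = 1\<^sub>m d"

definition msqrt :: "nat \<Rightarrow> complex mat \<Rightarrow> complex mat" where
  "msqrt d A = (THE B. psd d B \<and> B * B = A)"

definition trace_norm :: "nat \<Rightarrow> complex mat \<Rightarrow> real" where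
  "trace_norm d A = Re (mtrace (msqrt d (adj A * A)))"

definition P_guess :: "nat \<Rightarrow> nat \<Rightarrow> (nat \<Rightarrow> complex mat) \<Rightarrow> real" where
  "P_guess d N \<rho> = Sup {(\<Sum>x<N. Re (mtrace (M x * \<rho> x)) / real N) | M. povm d N M}"

end

theory Submission
  imports Defs "Jordan_Normal_Form.Schur_Decomposition"
begin

(* Taking traces in K = rho_x/N + r_x sigma_x shows that r_x = tr K - 1/N does not depend on x;
   call it r. Since the M_x sum to the identity, the success probability of any POVM E equals
   tr K - r sum_x tr(E_x sigma_x), which is at most 1/N + r because the trace of a product of
   positive semidefinite matrices is nonnegative; M attains the bound as r tr(M_x sigma_x) = 0.
   Finally rho_x/N - rho_y/N = -r (sigma_x - sigma_y), and the trace norm is absolutely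
   homogeneous and positive on nonzero Hermitian matrices. The nonnegativity of traces and the
   properties of the trace norm, which is defined through the unique positive square root, all
   rest on the spectral theorem for Hermitian matrices. *)

lemma sum_cnj_mult_self: "(\<Sum>a\<in>S. cnj (f a) * f a) = of_real (\<Sum>a\<in>S. (cmod (f a))\<^sup>2)"
  unfolding of_real_sum complex_norm_square by (simp add: mult.commute)

lemma sum_cmod_square_pos:
  fixes f :: "nat \<Rightarrow> complex"
  assumes "\<exists>a<d. f a \<noteq> 0"
  shows "0 < (\<Sum>a<d. (cmod (f a))\<^sup>2)"
proof -
  obtain a where a: "a < d" "f a \<noteq> 0" using assms by blast
  have "(cmod (f a))\<^sup>2 \<le> (\<Sum>a<d. (cmod (f a))\<^sup>2)"
    by (rule member_le_sum) (use a in auto)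
  moreover have "0 < (cmod (f a))\<^sup>2" using a by simp
  ultimately show ?thesis by linarith
qed

lemma index_mult_mat_sum:
  "A \<in> carrier_mat n m \<Longrightarrow> B \<in> carrier_mat m k \<Longrightarrow> a < n \<Longrightarrow> b < k \<Longrightarrow>
    (A * B) $$ (a,b) = (\<Sum>c<m. A $$ (a,c) * B $$ (c,b))"
  by (simp add: scalar_prod_def lessThan_atLeast0)

lemma index_mult_mat_vec_sum:
  "A \<in> carrier_mat n m \<Longrightarrow> v \<in> carrier_vec m \<Longrightarrow> a < n \<Longrightarrow>
    (A *\<^sub>v v) $ a = (\<Sum>b<m. A $$ (a,b) * v $ b)"
  by (simp add: scalar_prod_def lessThan_atLeast0)

lemma smult_one_mat_mult_vec:
  fixes k :: complex
  assumes v: "v \<in> carrier_vec d"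
  shows "(k \<cdot>\<^sub>m 1\<^sub>m d) *\<^sub>v v = k \<cdot>\<^sub>v v"
proof (rule eq_vecI)
  fix i assume "i < dim_vec (k \<cdot>\<^sub>v v)"
  hence i: "i < d" using v by simp
  have "((k \<cdot>\<^sub>m 1\<^sub>m d) *\<^sub>v v) $ i = (\<Sum>b<d. (k \<cdot>\<^sub>m 1\<^sub>m d) $$ (i,b) * v $ b)"
    by (rule index_mult_mat_vec_sum) (use i v in auto)
  also have "\<dots> = (\<Sum>b<d. if b = i then k * v $ b else 0)"
    using i by (intro sum.cong) auto
  finally show "((k \<cdot>\<^sub>m 1\<^sub>m d) *\<^sub>v v) $ i = (k \<cdot>\<^sub>v v) $ i" using i v by simp
qed (use v in simp)

lemma minus_mat_eq_0_iff:
  fixes A B :: "'a :: group_add mat"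
  assumes "A \<in> carrier_mat n m" "B \<in> carrier_mat n m"
  shows "A - B = 0\<^sub>m n m \<longleftrightarrow> A = B"
proof
  assume diff: "A - B = 0\<^sub>m n m"
  have "A $$ (i,j) = B $$ (i,j)" if "i < n" "j < m" for i j
    using arg_cong[OF diff, of "\<lambda>C. C $$ (i,j)"] assms that by simp
  thus "A = B" using assms by (intro eq_matI) auto
qed (use assms in simp)

lemma adj_index: "i < dim_col A \<Longrightarrow> j < dim_row A \<Longrightarrow> adj A $$ (i,j) = cnj (A $$ (j,i))"
  unfolding adj_def by simp

lemma adj_dim [simp]: "dim_row (adj A) = dim_col A" "dim_col (adj A) = dim_row A"
  unfolding adj_def by simp_all

lemma adj_carrier [simp]: "A \<in> carrier_mat n m \<Longrightarrow> adj A \<in> carrier_mat m n"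
  unfolding adj_def by auto

lemma mtrace_mult:
  "A \<in> carrier_mat n m \<Longrightarrow> B \<in> carrier_mat m n \<Longrightarrow>
    mtrace (A * B) = (\<Sum>i<n. \<Sum>k<m. A $$ (i,k) * B $$ (k,i))"
  unfolding mtrace_def by (simp add: scalar_prod_def lessThan_atLeast0)

lemma mtrace_mult_commute:
  "A \<in> carrier_mat n m \<Longrightarrow> B \<in> carrier_mat m n \<Longrightarrow> mtrace (A * B) = mtrace (B * A)"
  by (simp add: mtrace_mult, subst sum.swap, simp add: mult.commute)

lemma mtrace_add: "A \<in> carrier_mat d d \<Longrightarrow> B \<in> carrier_mat d d \<Longrightarrow> mtrace (A + B) = mtrace A + mtrace B"
  unfolding mtrace_def by (simp add: sum.distrib)

lemma mtrace_smult: "A \<in> carrier_mat d d \<Longrightarrow> mtrace (c \<cdot>\<^sub>m A) = c * mtrace A"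
  unfolding mtrace_def by (simp add: sum_distrib_left)

lemma mtrace_uminus: "A \<in> carrier_mat d d \<Longrightarrow> mtrace (- A) = - mtrace A"
  unfolding mtrace_def by (simp add: sum_negf)

lemma hermitian_iff_entries:
  "hermitian d A \<longleftrightarrow> A \<in> carrier_mat d d \<and> (\<forall>a<d. \<forall>b<d. A $$ (b,a) = cnj (A $$ (a,b)))"
proof (cases "A \<in> carrier_mat d d")
  case A: True
  have "adj A = A \<longleftrightarrow> (\<forall>a<d. \<forall>b<d. A $$ (b,a) = cnj (A $$ (a,b)))"
  proof
    assume eq: "adj A = A"
    show "\<forall>a<d. \<forall>b<d. A $$ (b,a) = cnj (A $$ (a,b))"
    proof (intro allI impI)
      fix a b assume "a < d" "b < d"
      hence "adj A $$ (b,a) = cnj (A $$ (a,b))" using A by (simp add: adj_index)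
      thus "A $$ (b,a) = cnj (A $$ (a,b))" unfolding eq .
    qed
  next
    assume h: "\<forall>a<d. \<forall>b<d. A $$ (b,a) = cnj (A $$ (a,b))"
    show "adj A = A"
    proof (rule eq_matI)
      fix i j assume "i < dim_row A" "j < dim_col A"
      hence ij: "i < d" "j < d" using A by auto
      have "A $$ (i,j) = cnj (A $$ (j,i))" using h ij by blast
      thus "adj A $$ (i,j) = A $$ (i,j)" using A ij by (simp add: adj_index)
    qed (use A in auto)
  qed
  thus ?thesis unfolding hermitian_def using A by blast
qed (simp add: hermitian_def)

lemma hermitian_carrier: "hermitian d A \<Longrightarrow> A \<in> carrier_mat d d"
  unfolding hermitian_def by simp

lemma hermitianD: "hermitian d A \<Longrightarrow> a < d \<Longrightarrow> b < d \<Longrightarrow> A $$ (b,a) = cnj (A $$ (a,b))"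
  unfolding hermitian_iff_entries by blast

lemma hermitian_add:
  assumes A: "hermitian d A" and B: "hermitian d B"
  shows "hermitian d (A + B)"
  unfolding hermitian_iff_entries
proof (intro conjI allI impI)
  show "A + B \<in> carrier_mat d d" using hermitian_carrier[OF B] by simp
  fix a b assume ab: "a < d" "b < d"
  thus "(A + B) $$ (b,a) = cnj ((A + B) $$ (a,b))"
    using hermitian_carrier[OF A] hermitian_carrier[OF B] hermitianD[OF A ab] hermitianD[OF B ab] by simp
qed

lemma hermitian_minus:
  assumes A: "hermitian d A" and B: "hermitian d B"
  shows "hermitian d (A - B)"
  unfolding hermitian_iff_entries
proof (intro conjI allI impI)
  show "A - B \<in> carrier_mat d d" using hermitian_carrier[OF B] by (rule minus_carrier_mat)
  fix a b assume ab: "a < d" "b < d"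
  thus "(A - B) $$ (b,a) = cnj ((A - B) $$ (a,b))"
    using hermitian_carrier[OF A] hermitian_carrier[OF B] hermitianD[OF A ab] hermitianD[OF B ab] by simp
qed

lemma hermitian_smult_real:
  assumes A: "hermitian d A"
  shows "hermitian d (of_real t \<cdot>\<^sub>m A)"
  unfolding hermitian_iff_entries
proof (intro conjI allI impI)
  show "of_real t \<cdot>\<^sub>m A \<in> carrier_mat d d" using hermitian_carrier[OF A] by simp
  fix a b assume ab: "a < d" "b < d"
  thus "(of_real t \<cdot>\<^sub>m A) $$ (b,a) = cnj ((of_real t \<cdot>\<^sub>m A) $$ (a,b))"
    using hermitian_carrier[OF A] hermitianD[OF A ab] by simp
qed

lemma hermitian_one_mat: "hermitian d (1\<^sub>m d)"
  unfolding hermitian_iff_entries by simp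

lemma hermitian_mult_self_diag:
  assumes E: "hermitian d E" and a: "a < d"
  shows "(E * E) $$ (a,a) = of_real (\<Sum>k<d. (cmod (E $$ (a,k)))\<^sup>2)"
proof -
  have Ec: "E \<in> carrier_mat d d" using E by (rule hermitian_carrier)
  have "(E * E) $$ (a,a) = (\<Sum>k<d. E $$ (a,k) * E $$ (k,a))"
    by (rule index_mult_mat_sum[OF Ec Ec a a])
  also have "\<dots> = (\<Sum>k<d. E $$ (a,k) * cnj (E $$ (a,k)))"
    using hermitianD[OF E a] by simp
  finally show ?thesis by (simp only: of_real_sum complex_norm_square)
qed

lemma hermitian_trace_mult_self_eq_0:
  assumes E: "hermitian d E" and tr: "mtrace (E * E) = 0"
  shows "E = 0\<^sub>m d d"
proof -
  have Ec: "E \<in> carrier_mat d d" using E by (rule hermitian_carrier)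
  have "mtrace (E * E) = (\<Sum>a<d. of_real (\<Sum>k<d. (cmod (E $$ (a,k)))\<^sup>2))"
    unfolding mtrace_def using Ec hermitian_mult_self_diag[OF E] by simp
  hence "(\<Sum>a<d. \<Sum>k<d. (cmod (E $$ (a,k)))\<^sup>2) = 0"
    using tr by (simp flip: of_real_sum)
  hence "\<forall>a<d. \<forall>k<d. E $$ (a,k) = 0"
    by (simp add: sum_nonneg sum_nonneg_eq_0_iff)
  thus ?thesis using Ec by (intro eq_matI) auto
qed

lemma eigenvector_coords:
  assumes A: "A \<in> carrier_mat d d" and ev: "eigenvector A v \<mu>"
  shows "v \<in> carrier_vec d" "\<forall>a<d. (\<Sum>b<d. A $$ (a,b) * v $ b) = \<mu> * v $ a" "\<exists>a<d. v $ a \<noteq> 0"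
proof -
  show v: "v \<in> carrier_vec d" using ev A unfolding eigenvector_def by auto
  have Av: "A *\<^sub>v v = \<mu> \<cdot>\<^sub>v v" and nz: "v \<noteq> 0\<^sub>v d" using ev A unfolding eigenvector_def by auto
  show "\<forall>a<d. (\<Sum>b<d. A $$ (a,b) * v $ b) = \<mu> * v $ a"
  proof (intro allI impI)
    fix a assume a: "a < d"
    have "(A *\<^sub>v v) $ a = (\<mu> \<cdot>\<^sub>v v) $ a" using Av by simp
    thus "(\<Sum>b<d. A $$ (a,b) * v $ b) = \<mu> * v $ a"
      using index_mult_mat_vec_sum[OF A v a] a v by simp
  qed
  show "\<exists>a<d. v $ a \<noteq> 0"
  proof (rule ccontr)
    assume "\<not> (\<exists>a<d. v $ a \<noteq> 0)"
    hence "v = 0\<^sub>v d" using v by (intro eq_vecI) auto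
    thus False using nz by simp
  qed
qed

section \<open>Hermitian forms and spectral sums\<close>

(* Vectors of C^d are represented by their coordinate functions f :: nat => complex;
   qform d A f is f^* A f. *)
definition qform :: "nat \<Rightarrow> complex mat \<Rightarrow> (nat \<Rightarrow> complex) \<Rightarrow> complex" where
  "qform d A f = (\<Sum>a<d. \<Sum>b<d. cnj (f a) * A $$ (a,b) * f b)"

lemma qform_altdef: "qform d A f = (\<Sum>a<d. cnj (f a) * (\<Sum>b<d. A $$ (a,b) * f b))"
  unfolding qform_def by (simp add: sum_distrib_left mult.assoc)

lemma qform_smult: "A \<in> carrier_mat d d \<Longrightarrow> qform d (c \<cdot>\<^sub>m A) f = c * qform d A f"
  unfolding qform_def by (simp add: sum_distrib_left ac_simps)

lemma cscalar_prod_mult_mat_vec_qform: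
  assumes "A \<in> carrier_mat d d" "v \<in> carrier_vec d"
  shows "(A *\<^sub>v v) \<bullet>c v = qform d A (\<lambda>i. v $ i)"
proof -
  have "(A *\<^sub>v v) \<bullet>c v = (\<Sum>a<d. (\<Sum>b<d. A $$ (a,b) * v $ b) * cnj (v $ a))"
    using assms unfolding scalar_prod_def mult_mat_vec_def row_def by (simp add: lessThan_atLeast0)
  thus ?thesis unfolding qform_altdef by (simp add: mult.commute)
qed

lemma psd_iff_qform: "psd d A \<longleftrightarrow> hermitian d A \<and> (\<forall>f. 0 \<le> Re (qform d A f))"
proof (cases "hermitian d A")
  case True
  hence A: "A \<in> carrier_mat d d" by (rule hermitian_carrier)
  have "qform d A f = (A *\<^sub>v vec d f) \<bullet>c vec d f" for f
    using cscalar_prod_mult_mat_vec_qform[OF A, of "vec d f"] unfolding qform_def by simp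
  moreover have "(A *\<^sub>v v) \<bullet>c v = qform d A (\<lambda>i. v $ i)" if "v \<in> carrier_vec d" for v
    using cscalar_prod_mult_mat_vec_qform[OF A that] .
  ultimately show ?thesis using True unfolding psd_def by (metis vec_carrier)
qed (simp add: psd_def)

lemma psd_hermitian: "psd d A \<Longrightarrow> hermitian d A"
  unfolding psd_def by simp

lemma psd_carrier: "psd d A \<Longrightarrow> A \<in> carrier_mat d d"
  unfolding psd_def hermitian_def by simp

lemma psd_qform_nonneg: "psd d A \<Longrightarrow> 0 \<le> Re (qform d A f)"
  unfolding psd_iff_qform by simp

lemma hermitian_sesquilinear_swap:
  assumes A: "hermitian d A"
  shows "(\<Sum>a<d. cnj (w a) * (\<Sum>b<d. A $$ (a,b) * f b)) = (\<Sum>b<d. cnj (\<Sum>a<d. A $$ (b,a) * w a) * f b)"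
proof -
  have "(\<Sum>a<d. cnj (w a) * (\<Sum>b<d. A $$ (a,b) * f b)) = (\<Sum>a<d. \<Sum>b<d. cnj (w a) * A $$ (a,b) * f b)"
    by (simp add: sum_distrib_left mult.assoc)
  also have "\<dots> = (\<Sum>b<d. \<Sum>a<d. cnj (w a) * A $$ (a,b) * f b)"
    by (rule sum.swap)
  also have "\<dots> = (\<Sum>b<d. cnj (\<Sum>a<d. A $$ (b,a) * w a) * f b)"
  proof (rule sum.cong[OF refl])
    fix b assume b: "b \<in> {..<d}"
    have "(\<Sum>a<d. cnj (w a) * A $$ (a,b) * f b) = (\<Sum>a<d. cnj (A $$ (b,a) * w a) * f b)"
    proof (rule sum.cong[OF refl])
      fix a assume a: "a \<in> {..<d}"
      have "A $$ (a,b) = cnj (A $$ (b,a))" using hermitianD[OF A, of b a] a b by simp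
      thus "cnj (w a) * A $$ (a,b) * f b = cnj (A $$ (b,a) * w a) * f b" by simp
    qed
    thus "(\<Sum>a<d. cnj (w a) * A $$ (a,b) * f b) = cnj (\<Sum>a<d. A $$ (b,a) * w a) * f b"
      by (simp add: sum_distrib_right)
  qed
  finally show ?thesis .
qed

lemma qform_hermitian_real: "hermitian d A \<Longrightarrow> cnj (qform d A f) = qform d A f"
  unfolding qform_altdef by (subst (2) hermitian_sesquilinear_swap) (simp_all add: mult.commute)

definition orthonormal :: "nat \<Rightarrow> nat \<Rightarrow> (nat \<Rightarrow> nat \<Rightarrow> complex) \<Rightarrow> bool" where
  "orthonormal d k u \<longleftrightarrow> (\<forall>i<k. \<forall>j<k. (\<Sum>a<d. cnj (u i a) * u j a) = (if i = j then 1 else 0))"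

lemma orthonormal_sum_delta:
  assumes u: "orthonormal d k u" and j: "j < k"
  shows "(\<Sum>i<k. g i * (\<Sum>b<d. cnj (u i b) * u j b)) = g j"
proof -
  have "(\<Sum>i<k. g i * (\<Sum>b<d. cnj (u i b) * u j b)) = (\<Sum>i<k. if i = j then g i else 0)"
    using u j unfolding orthonormal_def by (intro sum.cong) auto
  also have "\<dots> = g j" using j by simp
  finally show ?thesis .
qed

lemma orthonormal_extend:
  assumes u: "orthonormal d k u" and f: "(\<Sum>a<d. cnj (f a) * f a) = 1"
    and perp: "\<forall>i<k. (\<Sum>a<d. cnj (u i a) * f a) = 0"
  shows "orthonormal d (Suc k) (u(k := f))"
proof -
  have "(\<Sum>a<d. cnj (f a) * u i a) = 0" if "i < k" for i
  proof -
    have "(\<Sum>a<d. cnj (f a) * u i a) = cnj (\<Sum>a<d. cnj (u i a) * f a)"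
      by (simp add: mult.commute)
    also have "\<dots> = 0" using perp that by simp
    finally show ?thesis .
  qed
  thus ?thesis using u f perp unfolding orthonormal_def by (auto simp: less_Suc_eq)
qed

definition spectral_sum :: "nat \<Rightarrow> nat \<Rightarrow> (nat \<Rightarrow> real) \<Rightarrow> (nat \<Rightarrow> nat \<Rightarrow> complex) \<Rightarrow> complex mat" where
  "spectral_sum d k l u = mat d d (\<lambda>(a,b). \<Sum>i<k. of_real (l i) * u i a * cnj (u i b))"

lemma spectral_sum_carrier [simp]: "spectral_sum d k l u \<in> carrier_mat d d"
  unfolding spectral_sum_def by simp

lemma spectral_sum_dim [simp]:
  "dim_row (spectral_sum d k l u) = d" "dim_col (spectral_sum d k l u) = d"
  unfolding spectral_sum_def by simp_all

lemma index_spectral_sum: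
  "a < d \<Longrightarrow> b < d \<Longrightarrow> spectral_sum d k l u $$ (a,b) = (\<Sum>i<k. of_real (l i) * u i a * cnj (u i b))"
  unfolding spectral_sum_def by simp

lemma hermitian_spectral_sum: "hermitian d (spectral_sum d k l u)"
  unfolding hermitian_iff_entries by (simp add: index_spectral_sum ac_simps)

lemma spectral_sum_apply:
  assumes "a < d"
  shows "(\<Sum>b<d. spectral_sum d k l u $$ (a,b) * f b)
    = (\<Sum>i<k. of_real (l i) * u i a * (\<Sum>b<d. cnj (u i b) * f b))"
proof -
  have "(\<Sum>b<d. spectral_sum d k l u $$ (a,b) * f b) = (\<Sum>b<d. \<Sum>i<k. of_real (l i) * u i a * cnj (u i b) * f b)"
    using assms by (simp add: index_spectral_sum sum_distrib_right)
  also have "\<dots> = (\<Sum>i<k. of_real (l i) * u i a * (\<Sum>b<d. cnj (u i b) * f b))"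
    by (subst sum.swap) (simp add: sum_distrib_left mult.assoc)
  finally show ?thesis .
qed

lemma spectral_sum_apply_orthonormal:
  assumes u: "orthonormal d k u" and j: "j < k" and a: "a < d"
  shows "(\<Sum>b<d. spectral_sum d k l u $$ (a,b) * u j b) = of_real (l j) * u j a"
  unfolding spectral_sum_apply[OF a] using orthonormal_sum_delta[OF u j, of "\<lambda>i. of_real (l i) * u i a"]
  by (simp add: mult.assoc)

lemma qform_spectral_sum:
  "qform d (spectral_sum d k l u) f = of_real (\<Sum>i<k. l i * (cmod (\<Sum>a<d. cnj (u i a) * f a))\<^sup>2)"
proof -
  define c where "c i = (\<Sum>a<d. cnj (u i a) * f a)" for i
  have "qform d (spectral_sum d k l u) f = (\<Sum>a<d. cnj (f a) * (\<Sum>i<k. of_real (l i) * u i a * c i))"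
    unfolding qform_altdef c_def by (simp add: spectral_sum_apply)
  also have "\<dots> = (\<Sum>a<d. \<Sum>i<k. of_real (l i) * c i * (cnj (f a) * u i a))"
    by (simp add: sum_distrib_left ac_simps)
  also have "\<dots> = (\<Sum>i<k. of_real (l i) * c i * (\<Sum>a<d. cnj (f a) * u i a))"
    by (subst sum.swap) (simp add: sum_distrib_left)
  also have "\<dots> = (\<Sum>i<k. of_real (l i * (cmod (c i))\<^sup>2))"
  proof (rule sum.cong[OF refl])
    fix i
    have "(\<Sum>a<d. cnj (f a) * u i a) = cnj (c i)" unfolding c_def by (simp add: mult.commute)
    thus "of_real (l i) * c i * (\<Sum>a<d. cnj (f a) * u i a) = of_real (l i * (cmod (c i))\<^sup>2)"
      by (simp only: of_real_mult complex_norm_square mult.assoc)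
  qed
  finally show ?thesis by (simp add: c_def of_real_sum)
qed

lemma psd_spectral_sum: "(\<forall>i<k. 0 \<le> l i) \<Longrightarrow> psd d (spectral_sum d k l u)"
  unfolding psd_iff_qform by (auto simp: hermitian_spectral_sum qform_spectral_sum intro!: sum_nonneg)

lemma spectral_sum_weight_nonneg:
  assumes u: "orthonormal d k u" and S: "psd d (spectral_sum d k l u)" and i: "i < k"
  shows "0 \<le> l i"
proof -
  have "qform d (spectral_sum d k l u) (u i) = (\<Sum>a<d. cnj (u i a) * (of_real (l i) * u i a))"
    unfolding qform_altdef using u i by (simp add: spectral_sum_apply_orthonormal)
  also have "\<dots> = of_real (l i) * (\<Sum>a<d. cnj (u i a) * u i a)"
    by (simp add: sum_distrib_left ac_simps)
  also have "\<dots> = of_real (l i)"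
    using u i by (simp add: orthonormal_def)
  finally have "qform d (spectral_sum d k l u) (u i) = of_real (l i)" .
  thus ?thesis using psd_qform_nonneg[OF S, of "u i"] by simp
qed

lemma mult_spectral_sum_eigen:
  assumes M: "M \<in> carrier_mat d d"
    and eig: "\<forall>j<k. \<forall>a<d. (\<Sum>c<d. M $$ (a,c) * u j c) = of_real (lam j) * u j a"
  shows "M * spectral_sum d k g u = spectral_sum d k (\<lambda>j. lam j * g j) u"
proof (rule eq_matI)
  fix a b assume "a < dim_row (spectral_sum d k (\<lambda>j. lam j * g j) u)"
    "b < dim_col (spectral_sum d k (\<lambda>j. lam j * g j) u)"
  hence ab: "a < d" "b < d" by auto
  have "(M * spectral_sum d k g u) $$ (a,b)
      = (\<Sum>c<d. \<Sum>j<k. of_real (g j) * cnj (u j b) * (M $$ (a,c) * u j c))"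
    using ab by (simp add: index_mult_mat_sum[OF M spectral_sum_carrier] index_spectral_sum
        sum_distrib_left ac_simps)
  also have "\<dots> = (\<Sum>j<k. of_real (g j) * cnj (u j b) * (\<Sum>c<d. M $$ (a,c) * u j c))"
    by (subst sum.swap) (simp add: sum_distrib_left)
  also have "\<dots> = spectral_sum d k (\<lambda>j. lam j * g j) u $$ (a,b)"
    using eig ab by (simp add: index_spectral_sum ac_simps)
  finally show "(M * spectral_sum d k g u) $$ (a,b) = spectral_sum d k (\<lambda>j. lam j * g j) u $$ (a,b)" .
qed (use M in auto)

lemma mult_spectral_sum:
  "orthonormal d k u \<Longrightarrow>
    spectral_sum d k g u * spectral_sum d k h u = spectral_sum d k (\<lambda>i. g i * h i) u"
  by (simp add: mult_spectral_sum_eigen spectral_sum_apply_orthonormal)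

lemma mtrace_spectral_sum:
  assumes "orthonormal d k u"
  shows "mtrace (spectral_sum d k l u) = of_real (\<Sum>i<k. l i)"
proof -
  have "mtrace (spectral_sum d k l u) = (\<Sum>a<d. \<Sum>i<k. of_real (l i) * (cnj (u i a) * u i a))"
    unfolding mtrace_def by (simp add: index_spectral_sum ac_simps)
  also have "\<dots> = (\<Sum>i<k. of_real (l i) * (\<Sum>a<d. cnj (u i a) * u i a))"
    by (subst sum.swap) (simp add: sum_distrib_left)
  finally show ?thesis using assms by (simp add: orthonormal_def)
qed

lemma mtrace_mult_spectral_sum:
  assumes M: "M \<in> carrier_mat d d"
  shows "mtrace (M * spectral_sum d k l u) = (\<Sum>i<k. of_real (l i) * qform d M (u i))"
proof -
  have "mtrace (M * spectral_sum d k l u)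
      = (\<Sum>a<d. \<Sum>i<k. of_real (l i) * cnj (u i a) * (\<Sum>b<d. M $$ (a,b) * u i b))"
    unfolding mtrace_mult[OF M spectral_sum_carrier]
  proof (rule sum.cong[OF refl])
    fix a assume a: "a \<in> {..<d}"
    have "(\<Sum>b<d. M $$ (a,b) * spectral_sum d k l u $$ (b,a))
        = (\<Sum>b<d. \<Sum>i<k. of_real (l i) * cnj (u i a) * (M $$ (a,b) * u i b))"
      using a by (intro sum.cong[OF refl]) (simp add: index_spectral_sum sum_distrib_left ac_simps)
    also have "\<dots> = (\<Sum>i<k. of_real (l i) * cnj (u i a) * (\<Sum>b<d. M $$ (a,b) * u i b))"
      by (subst sum.swap) (simp add: sum_distrib_left)
    finally show "(\<Sum>b<d. M $$ (a,b) * spectral_sum d k l u $$ (b,a)) = \<dots>" .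
  qed
  also have "\<dots> = (\<Sum>i<k. of_real (l i) * qform d M (u i))"
    unfolding qform_altdef by (subst sum.swap) (simp add: sum_distrib_left ac_simps)
  finally show ?thesis .
qed

section \<open>The spectral theorem for Hermitian matrices\<close>

lemma hermitian_eigenvalue_real:
  assumes A: "hermitian d A"
    and eig: "\<forall>a<d. (\<Sum>b<d. A $$ (a,b) * f b) = \<mu> * f a" and nz: "\<exists>a<d. f a \<noteq> 0"
  shows "\<mu> = of_real (Re \<mu>)"
proof -
  define n where "n = (\<Sum>a<d. (cmod (f a))\<^sup>2)"
  have "qform d A f = (\<Sum>a<d. cnj (f a) * (\<mu> * f a))"
    unfolding qform_altdef using eig by simp
  also have "\<dots> = \<mu> * (\<Sum>a<d. cnj (f a) * f a)"
    by (simp add: sum_distrib_left ac_simps)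
  finally have "qform d A f = \<mu> * of_real n"
    unfolding n_def sum_cnj_mult_self .
  hence "cnj \<mu> * of_real n = \<mu> * of_real n"
    using qform_hermitian_real[OF A, of f] by simp
  moreover have "n \<noteq> 0" using sum_cmod_square_pos[OF nz] unfolding n_def by simp
  ultimately have "cnj \<mu> = \<mu>" by simp
  hence "Im \<mu> = 0" by (simp add: complex_eq_iff)
  thus ?thesis by (simp add: complex_eq_iff)
qed

lemma hermitian_eigenvectors_orthogonal:
  assumes A: "hermitian d A"
    and w: "\<forall>a<d. (\<Sum>b<d. A $$ (a,b) * w b) = of_real c * w a"
    and f: "\<forall>a<d. (\<Sum>b<d. A $$ (a,b) * f b) = \<mu> * f a"
    and ne: "\<mu> \<noteq> of_real c"
  shows "(\<Sum>a<d. cnj (w a) * f a) = 0"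
proof -
  define z where "z = (\<Sum>a<d. cnj (w a) * f a)"
  have "\<mu> * z = (\<Sum>a<d. cnj (w a) * (\<mu> * f a))"
    unfolding z_def by (simp add: sum_distrib_left ac_simps)
  also have "\<dots> = (\<Sum>a<d. cnj (w a) * (\<Sum>b<d. A $$ (a,b) * f b))"
    using f by simp
  also have "\<dots> = (\<Sum>b<d. cnj (of_real c * w b) * f b)"
    unfolding hermitian_sesquilinear_swap[OF A] using w by simp
  also have "\<dots> = of_real c * z"
    unfolding z_def by (simp add: sum_distrib_left mult.assoc)
  finally have "(\<mu> - of_real c) * z = 0" by (simp add: algebra_simps)
  thus ?thesis using ne unfolding z_def by simp
qed

lemma upper_triangular_zero_diag_trace_square:
  assumes B: "B \<in> carrier_mat d d" and ut: "upper_triangular B" and diag: "\<forall>i<d. B $$ (i,i) = 0"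
  shows "mtrace (B * B) = 0"
proof -
  have zero: "B $$ (i,k) * B $$ (k,i) = 0" if "i < d" "k < d" for i k
    using ut B diag that unfolding upper_triangular_def by (cases i k rule: linorder_cases) auto
  show ?thesis unfolding mtrace_mult[OF B B] by (intro sum.neutral ballI zero) auto
qed

(* By Schur triangularisation, tr(G^2) is the sum of the squared eigenvalues of G. *)
lemma hermitian_eigenvalues_zero_imp_zero:
  assumes G: "hermitian d G" and ev: "\<forall>v \<mu>. eigenvector G v \<mu> \<longrightarrow> \<mu> = 0"
  shows "G = 0\<^sub>m d d"
proof -
  have Gc: "G \<in> carrier_mat d d" using G by (rule hermitian_carrier)
  obtain es where cp: "char_poly G = (\<Prod>e\<leftarrow>es. [:- e, 1:])"
    using char_poly_factorized[OF Gc] by blast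
  obtain B P Q where sd: "schur_decomposition G es = (B,P,Q)"
    by (cases "schur_decomposition G es") auto
  have sim: "similar_mat_wit G B P Q" and ut: "upper_triangular B" and dg: "diag_mat B = es"
    using schur_decomposition[OF Gc cp sd] by auto
  note W = similar_mat_witD2[OF Gc sim]
  have es_zero: "e = 0" if "e \<in> set es" for e
  proof -
    have "poly (char_poly G) e = 0"
      unfolding cp using that by (induct es) auto
    then obtain v where "eigenvector G v e"
      using eigenvalue_root_char_poly[OF Gc] unfolding eigenvalue_def by blast
    thus "e = 0" using ev by blast
  qed
  have "B $$ (i,i) = 0" if "i < d" for i
  proof -
    have "B $$ (i,i) = diag_mat B ! i" unfolding diag_mat_def using that W by simp
    also have "\<dots> \<in> set es" unfolding dg[symmetric] diag_mat_def using that W by simp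
    finally show ?thesis by (rule es_zero)
  qed
  hence trB: "mtrace (B * B) = 0"
    using upper_triangular_zero_diag_trace_square W ut by blast
  have "G ^\<^sub>m 2 = P * B ^\<^sub>m 2 * Q"
    by (rule similar_mat_wit_pow_id[OF sim])
  hence "G * G = P * (B * B) * Q"
    using Gc W by (simp add: numeral_2_eq_2)
  hence "mtrace (G * G) = mtrace (Q * (P * (B * B)))"
    using W by (simp add: mtrace_mult_commute[of "P * (B * B)" d d Q])
  also have "Q * (P * (B * B)) = (Q * P) * (B * B)"
    using W by (simp add: assoc_mult_mat[of Q d d P d "B * B" d, symmetric])
  also have "\<dots> = B * B" using W by simp
  finally show ?thesis using hermitian_trace_mult_self_eq_0[OF G] trB by simp
qed

lemma hermitian_single_eigenvalue_imp_scalar: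
  assumes H: "hermitian d H" and ev: "\<forall>v \<mu>. eigenvector H v \<mu> \<longrightarrow> \<mu> = of_real c"
  shows "H = of_real c \<cdot>\<^sub>m 1\<^sub>m d"
proof -
  have Hc: "H \<in> carrier_mat d d" using H by (rule hermitian_carrier)
  define G where "G = H - of_real c \<cdot>\<^sub>m 1\<^sub>m d"
  have Gc: "G \<in> carrier_mat d d" unfolding G_def by (rule minus_carrier_mat) simp
  have HG: "H = G + of_real c \<cdot>\<^sub>m 1\<^sub>m d"
    unfolding G_def using Hc by (intro eq_matI) auto
  have "hermitian d (of_real c \<cdot>\<^sub>m 1\<^sub>m d)"
    by (rule hermitian_smult_real[OF hermitian_one_mat])
  hence G_herm: "hermitian d G" unfolding G_def using H hermitian_minus by blast
  have "\<mu> = 0" if "eigenvector G v \<mu>" for v \<mu>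
  proof -
    have v: "v \<in> carrier_vec d" and Gv: "G *\<^sub>v v = \<mu> \<cdot>\<^sub>v v" and nz: "v \<noteq> 0\<^sub>v d"
      using that Gc unfolding eigenvector_def by auto
    have "H *\<^sub>v v = (\<mu> + of_real c) \<cdot>\<^sub>v v"
      unfolding HG using Gc v Gv by (simp add: add_mult_distrib_mat_vec add_smult_distrib_vec smult_one_mat_mult_vec)
    hence "eigenvector H v (\<mu> + of_real c)"
      unfolding eigenvector_def using v nz Hc by simp
    hence "\<mu> + of_real c = of_real c" using ev by blast
    thus "\<mu> = 0" by simp
  qed
  hence "G = 0\<^sub>m d d" using hermitian_eigenvalues_zero_imp_zero[OF G_herm] by blast
  thus ?thesis unfolding HG using Hc by (intro eq_matI) auto
qed

lemma exists_unit_rescaling: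
  fixes f :: "nat \<Rightarrow> complex"
  assumes "\<exists>a<d. f a \<noteq> 0"
  obtains s :: real where "(\<Sum>a<d. cnj (of_real s * f a) * (of_real s * f a)) = 1"
proof
  define n where "n = (\<Sum>a<d. (cmod (f a))\<^sup>2)"
  have "0 < n" unfolding n_def using assms by (rule sum_cmod_square_pos)
  define s where "s = 1 / sqrt n"
  have "s * s * n = 1" unfolding s_def using \<open>0 < n\<close> by (simp add: field_simps)
  have "(\<Sum>a<d. cnj (of_real s * f a) * (of_real s * f a)) = of_real s * of_real s * (\<Sum>a<d. cnj (f a) * f a)"
    by (simp add: sum_distrib_left ac_simps)
  also have "\<dots> = of_real (s * s * n)" unfolding sum_cnj_mult_self n_def by simp
  finally show "(\<Sum>a<d. cnj (of_real s * f a) * (of_real s * f a)) = 1"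
    using \<open>s * s * n = 1\<close> by simp
qed

lemma orthonormal_card_eq_if_complete:
  assumes u: "orthonormal d k u" and complete: "spectral_sum d k (\<lambda>_. 1) u = 1\<^sub>m d"
  shows "k = d"
proof -
  have "of_real (real k) = (of_nat d :: complex)"
    using mtrace_spectral_sum[OF u, of "\<lambda>_. 1"] unfolding complete mtrace_def by simp
  thus ?thesis by simp
qed

lemma orthonormal_extend_by_eigenvector:
  assumes A: "hermitian d A" and u: "orthonormal d k u"
    and Af: "\<forall>a<d. (\<Sum>b<d. A $$ (a,b) * f b) = \<mu> * f a" and nz: "\<exists>a<d. f a \<noteq> 0"
    and perp: "\<forall>i<k. (\<Sum>a<d. cnj (u i a) * f a) = 0"
  obtains g l where "\<forall>a<d. (\<Sum>b<d. A $$ (a,b) * g b) = of_real l * g a"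
    and "orthonormal d (Suc k) (u(k := g))"
proof -
  have \<mu>: "\<mu> = of_real (Re \<mu>)"
    by (rule hermitian_eigenvalue_real[OF A Af nz])
  obtain s :: real where s: "(\<Sum>a<d. cnj (of_real s * f a) * (of_real s * f a)) = 1"
    using exists_unit_rescaling[OF nz] by blast
  show thesis
  proof (rule that)
    show "\<forall>a<d. (\<Sum>b<d. A $$ (a,b) * (of_real s * f b)) = of_real (Re \<mu>) * (of_real s * f a)"
      using Af \<mu> by (simp add: sum_distrib_left ac_simps flip: sum_distrib_left)
    have "\<forall>i<k. (\<Sum>a<d. cnj (u i a) * (of_real s * f a)) = 0"
      using perp by (simp add: ac_simps flip: sum_distrib_left)
    thus "orthonormal d (Suc k) (u(k := \<lambda>a. of_real s * f a))"
      by (rule orthonormal_extend[OF u s])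
  qed
qed

(* In A + sum_{i<k} (c - lam_i) u_i u_i^* the u_i get eigenvalue c, so an eigenvector for another
   eigenvalue is orthogonal to them and therefore an eigenvector of A itself. *)
lemma deflation_eigenvector:
  assumes A: "hermitian d A" and u: "orthonormal d k u"
    and eig: "\<forall>i<k. \<forall>a<d. (\<Sum>b<d. A $$ (a,b) * u i b) = of_real (lam i) * u i a"
    and ev: "eigenvector (A + spectral_sum d k (\<lambda>i. c - lam i) u) v \<mu>" and ne: "\<mu> \<noteq> of_real c"
  obtains g l where "\<forall>a<d. (\<Sum>b<d. A $$ (a,b) * g b) = of_real l * g a"
    and "orthonormal d (Suc k) (u(k := g))"
proof -
  define S where "S = A + spectral_sum d k (\<lambda>i. c - lam i) u"
  have S_herm: "hermitian d S"
    unfolding S_def by (intro hermitian_add A hermitian_spectral_sum)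
  have S_apply: "(\<Sum>b<d. S $$ (a,b) * f b)
      = (\<Sum>b<d. A $$ (a,b) * f b) + (\<Sum>b<d. spectral_sum d k (\<lambda>i. c - lam i) u $$ (a,b) * f b)"
    if "a < d" for a f
    using that hermitian_carrier[OF A] unfolding S_def by (simp add: algebra_simps sum.distrib)
  have S_u: "\<forall>a<d. (\<Sum>b<d. S $$ (a,b) * u j b) = of_real c * u j a" if j: "j < k" for j
  proof (intro allI impI)
    fix a assume a: "a < d"
    have "(\<Sum>b<d. S $$ (a,b) * u j b) = of_real (lam j) * u j a + of_real (c - lam j) * u j a"
      using eig j a by (simp add: S_apply spectral_sum_apply_orthonormal[OF u])
    thus "(\<Sum>b<d. S $$ (a,b) * u j b) = of_real c * u j a"
      by (simp add: algebra_simps)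
  qed
  define f where "f b = v $ b" for b
  have Sf: "\<forall>a<d. (\<Sum>b<d. S $$ (a,b) * f b) = \<mu> * f a" and nz: "\<exists>a<d. f a \<noteq> 0"
    using eigenvector_coords[OF hermitian_carrier[OF S_herm] ev[folded S_def]] unfolding f_def by blast+
  have perp: "\<forall>i<k. (\<Sum>a<d. cnj (u i a) * f a) = 0"
    using hermitian_eigenvectors_orthogonal[OF S_herm S_u Sf ne] by blast
  have Af: "\<forall>a<d. (\<Sum>b<d. A $$ (a,b) * f b) = \<mu> * f a"
    using Sf perp by (simp add: S_apply spectral_sum_apply)
  show thesis by (rule orthonormal_extend_by_eigenvector[OF A u Af nz perp that])
qed

(* If neither deflation for c = 0 nor for c = 1 has another eigenvalue, they equal 0 and 1,
   so sum_{i<k} u_i u_i^* = 1, which forces k = d. *)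
lemma hermitian_orthonormal_eigenvectors_extend:
  assumes A: "hermitian d A" and k: "k < d" and u: "orthonormal d k u"
    and eig: "\<forall>i<k. \<forall>a<d. (\<Sum>b<d. A $$ (a,b) * u i b) = of_real (lam i) * u i a"
  obtains f l where "\<forall>a<d. (\<Sum>b<d. A $$ (a,b) * f b) = of_real l * f a"
    and "orthonormal d (Suc k) (u(k := f))"
proof -
  define S where "S c = A + spectral_sum d k (\<lambda>i. c - lam i) u" for c
  have S_herm: "hermitian d (S c)" for c
    unfolding S_def by (intro hermitian_add A hermitian_spectral_sum)
  show thesis
  proof (cases "\<exists>c\<in>{0,1}. \<exists>v \<mu>. eigenvector (S c) v \<mu> \<and> \<mu> \<noteq> of_real c")
    case True
    then obtain c v \<mu> where "eigenvector (S c) v \<mu>" "\<mu> \<noteq> of_real c" by blast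
    thus thesis unfolding S_def by (rule deflation_eigenvector[OF A u eig _ _ that])
  next
    case False
    hence scalar: "S c = of_real c \<cdot>\<^sub>m 1\<^sub>m d" if "c \<in> {0,1}" for c
      using that hermitian_single_eigenvalue_imp_scalar[OF S_herm] by blast
    have "spectral_sum d k (\<lambda>_. 1) u = S 1 - S 0"
      using hermitian_carrier[OF A] by (intro eq_matI)
        (auto simp: S_def index_spectral_sum algebra_simps simp flip: sum_subtractf)
    also have "\<dots> = 1\<^sub>m d"
      using scalar[of 0] scalar[of 1] by (intro eq_matI) auto
    finally have "k = d" by (rule orthonormal_card_eq_if_complete[OF u])
    thus thesis using k by simp
  qed
qed

lemma hermitian_orthonormal_eigenvectors:
  assumes A: "hermitian d A" and "k \<le> d"
  shows "\<exists>u lam. orthonormal d k u \<and> (\<forall>i<k. \<forall>a<d. (\<Sum>b<d. A $$ (a,b) * u i b) = of_real (lam i) * u i a)"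
  using \<open>k \<le> d\<close>
proof (induction k)
  case 0
  thus ?case by (simp add: orthonormal_def)
next
  case (Suc k)
  then obtain u lam where u: "orthonormal d k u"
    and eig: "\<forall>i<k. \<forall>a<d. (\<Sum>b<d. A $$ (a,b) * u i b) = of_real (lam i) * u i a"
    by auto
  obtain f l where Af: "\<forall>a<d. (\<Sum>b<d. A $$ (a,b) * f b) = of_real l * f a"
    and u': "orthonormal d (Suc k) (u(k := f))"
    using hermitian_orthonormal_eigenvectors_extend[OF A _ u eig] Suc.prems by auto
  have "\<forall>i<Suc k. \<forall>a<d. (\<Sum>b<d. A $$ (a,b) * (u(k := f)) i b) = of_real ((lam(k := l)) i) * (u(k := f)) i a"
    using eig Af by (auto simp: less_Suc_eq)
  thus ?case using u' by blast
qed

lemma orthonormal_complete: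
  assumes u: "orthonormal d d u"
  shows "spectral_sum d d (\<lambda>_. 1) u = 1\<^sub>m d"
proof -
  define U where "U = mat d d (\<lambda>(a,i). u i a)"
  have Uc: "U \<in> carrier_mat d d" unfolding U_def by simp
  have "adj U * U = 1\<^sub>m d"
  proof (rule eq_matI)
    fix i j assume "i < dim_row (1\<^sub>m d)" "j < dim_col (1\<^sub>m d)"
    hence ij: "i < d" "j < d" by auto
    have "(adj U * U) $$ (i,j) = (\<Sum>a<d. adj U $$ (i,a) * U $$ (a,j))"
      by (rule index_mult_mat_sum[OF adj_carrier[OF Uc] Uc ij])
    thus "(adj U * U) $$ (i,j) = 1\<^sub>m d $$ (i,j)"
      using u ij Uc unfolding orthonormal_def by (simp add: adj_index U_def)
  qed (use Uc in auto)
  hence UU: "U * adj U = 1\<^sub>m d"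
    by (rule mat_mult_left_right_inverse[OF adj_carrier[OF Uc] Uc])
  show ?thesis
  proof (rule eq_matI)
    fix a b assume "a < dim_row (1\<^sub>m d)" "b < dim_col (1\<^sub>m d)"
    hence ab: "a < d" "b < d" by auto
    have "(U * adj U) $$ (a,b) = (\<Sum>i<d. U $$ (a,i) * adj U $$ (i,b))"
      by (rule index_mult_mat_sum[OF Uc adj_carrier[OF Uc] ab])
    hence "spectral_sum d d (\<lambda>_. 1) u $$ (a,b) = (U * adj U) $$ (a,b)"
      using ab Uc by (simp add: index_spectral_sum adj_index U_def)
    thus "spectral_sum d d (\<lambda>_. 1) u $$ (a,b) = 1\<^sub>m d $$ (a,b)" unfolding UU .
  qed auto
qed

theorem hermitian_spectral_decomposition:
  assumes A: "hermitian d A"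
  obtains u l where "orthonormal d d u" and "A = spectral_sum d d l u"
proof -
  have Ac: "A \<in> carrier_mat d d" using A by (rule hermitian_carrier)
  obtain u lam where u: "orthonormal d d u"
    and eig: "\<forall>i<d. \<forall>a<d. (\<Sum>b<d. A $$ (a,b) * u i b) = of_real (lam i) * u i a"
    using hermitian_orthonormal_eigenvectors[OF A order.refl] by blast
  have "A = A * spectral_sum d d (\<lambda>_. 1) u"
    using Ac unfolding orthonormal_complete[OF u] by simp
  also have "\<dots> = spectral_sum d d (\<lambda>i. lam i * 1) u"
    by (rule mult_spectral_sum_eigen[OF Ac eig])
  finally show thesis using that u by simp
qed

section \<open>Positive semidefinite matrices and square roots\<close>

lemma psd_spectral_decomposition:
  assumes A: "psd d A"
  obtains u l where "orthonormal d d u" and "\<forall>i<d. 0 \<le> l i" and "A = spectral_sum d d l u"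
proof -
  obtain u l where u: "orthonormal d d u" and A_eq: "A = spectral_sum d d l u"
    using hermitian_spectral_decomposition[OF psd_hermitian[OF A]] by blast
  have "\<forall>i<d. 0 \<le> l i"
    using spectral_sum_weight_nonneg[OF u] A unfolding A_eq by blast
  thus thesis using that u A_eq by blast
qed

lemma mtrace_mult_psd_nonneg:
  assumes M: "psd d M" and S: "psd d S"
  shows "0 \<le> Re (mtrace (M * S))"
proof -
  obtain u l where l: "\<forall>i<d. 0 \<le> l i" and S_eq: "S = spectral_sum d d l u"
    using psd_spectral_decomposition[OF S] by blast
  have "Re (mtrace (M * S)) = (\<Sum>i<d. l i * Re (qform d M (u i)))"
    unfolding S_eq mtrace_mult_spectral_sum[OF psd_carrier[OF M]] by (simp add: Re_sum)
  thus ?thesis using l psd_qform_nonneg[OF M] by (auto intro!: sum_nonneg)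
qed

lemma psd_trace_nonneg:
  assumes A: "psd d A"
  shows "0 \<le> Re (mtrace A)"
proof -
  obtain u l where u: "orthonormal d d u" and l: "\<forall>i<d. 0 \<le> l i" and A_eq: "A = spectral_sum d d l u"
    using psd_spectral_decomposition[OF A] by blast
  show ?thesis unfolding A_eq mtrace_spectral_sum[OF u] using l by (auto intro!: sum_nonneg)
qed

lemma psd_trace_eq_0_imp_zero:
  assumes A: "psd d A" and tr: "Re (mtrace A) = 0"
  shows "A = 0\<^sub>m d d"
proof -
  obtain u l where u: "orthonormal d d u" and l: "\<forall>i<d. 0 \<le> l i" and A_eq: "A = spectral_sum d d l u"
    using psd_spectral_decomposition[OF A] by blast
  have "(\<Sum>i<d. l i) = 0" using tr unfolding A_eq mtrace_spectral_sum[OF u] by simp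
  hence "\<forall>i<d. l i = 0" using l by (subst (asm) sum_nonneg_eq_0_iff) auto
  thus ?thesis unfolding A_eq by (intro eq_matI) (simp_all add: index_spectral_sum)
qed

lemma psd_qform_eq_0_imp_apply_zero:
  assumes A: "psd d A" and q: "Re (qform d A f) = 0" and a: "a < d"
  shows "(\<Sum>b<d. A $$ (a,b) * f b) = 0"
proof -
  obtain u l where l: "\<forall>i<d. 0 \<le> l i" and A_eq: "A = spectral_sum d d l u"
    using psd_spectral_decomposition[OF A] by blast
  have "(\<Sum>i<d. l i * (cmod (\<Sum>b<d. cnj (u i b) * f b))\<^sup>2) = 0"
    using q unfolding A_eq qform_spectral_sum by simp
  hence "\<forall>i<d. l i * (cmod (\<Sum>b<d. cnj (u i b) * f b))\<^sup>2 = 0"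
    using l by (subst (asm) sum_nonneg_eq_0_iff) auto
  hence "\<forall>i<d. of_real (l i) * (\<Sum>b<d. cnj (u i b) * f b) = 0"
    by simp
  thus ?thesis unfolding A_eq spectral_sum_apply[OF a] by (intro sum.neutral ballI) auto
qed

lemma psd_smult_nonneg:
  assumes A: "psd d A" and t: "0 \<le> t"
  shows "psd d (of_real t \<cdot>\<^sub>m A)"
  unfolding psd_iff_qform
proof (intro conjI allI)
  show "hermitian d (of_real t \<cdot>\<^sub>m A)"
    by (rule hermitian_smult_real[OF psd_hermitian[OF A]])
  fix f
  show "0 \<le> Re (qform d (of_real t \<cdot>\<^sub>m A) f)"
    using psd_qform_nonneg[OF A, of f] t by (simp add: qform_smult[OF psd_carrier[OF A]])
qed

lemma hermitian_square_psd_root: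
  assumes E: "hermitian d E"
  obtains B where "psd d B" and "B * B = E * E"
proof -
  obtain u l where u: "orthonormal d d u" and E_eq: "E = spectral_sum d d l u"
    using hermitian_spectral_decomposition[OF E] by blast
  show thesis
  proof (rule that)
    show "psd d (spectral_sum d d (\<lambda>i. \<bar>l i\<bar>) u)"
      by (rule psd_spectral_sum) simp
    show "spectral_sum d d (\<lambda>i. \<bar>l i\<bar>) u * spectral_sum d d (\<lambda>i. \<bar>l i\<bar>) u = E * E"
      unfolding E_eq mult_spectral_sum[OF u] by (simp add: abs_mult_self_eq)
  qed
qed

lemma mtrace_hermitian_sandwich:
  assumes E: "hermitian d E" and S: "S \<in> carrier_mat d d"
  shows "mtrace (E * S * E) = (\<Sum>i<d. qform d S (\<lambda>k. E $$ (k,i)))"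
proof -
  have Ec: "E \<in> carrier_mat d d" using E by (rule hermitian_carrier)
  have "mtrace (E * S * E) = (\<Sum>i<d. \<Sum>l<d. (E * S) $$ (i,l) * E $$ (l,i))"
    by (rule mtrace_mult) (use Ec S in auto)
  also have "\<dots> = (\<Sum>i<d. qform d S (\<lambda>k. E $$ (k,i)))"
  proof (rule sum.cong[OF refl])
    fix i assume i: "i \<in> {..<d}"
    have "(\<Sum>l<d. (E * S) $$ (i,l) * E $$ (l,i)) = (\<Sum>l<d. \<Sum>k<d. cnj (E $$ (k,i)) * S $$ (k,l) * E $$ (l,i))"
    proof (rule sum.cong[OF refl])
      fix l assume l: "l \<in> {..<d}"
      have "(E * S) $$ (i,l) = (\<Sum>k<d. E $$ (i,k) * S $$ (k,l))"
        using i l by (intro index_mult_mat_sum[OF Ec S]) auto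
      also have "\<dots> = (\<Sum>k<d. cnj (E $$ (k,i)) * S $$ (k,l))"
      proof (rule sum.cong[OF refl])
        fix k assume "k \<in> {..<d}"
        thus "E $$ (i,k) * S $$ (k,l) = cnj (E $$ (k,i)) * S $$ (k,l)"
          using hermitianD[OF E, of k i] i by simp
      qed
      finally show "(E * S) $$ (i,l) * E $$ (l,i) = (\<Sum>k<d. cnj (E $$ (k,i)) * S $$ (k,l) * E $$ (l,i))"
        by (simp add: sum_distrib_right)
    qed
    also have "\<dots> = qform d S (\<lambda>k. E $$ (k,i))"
      unfolding qform_def by (rule sum.swap)
    finally show "(\<Sum>l<d. (E * S) $$ (i,l) * E $$ (l,i)) = qform d S (\<lambda>k. E $$ (k,i))" .
  qed
  finally show ?thesis .
qed

lemma mtrace_hermitian_sandwich_nonneg: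
  assumes E: "hermitian d E" and S: "psd d S"
  shows "0 \<le> Re (mtrace (E * S * E))"
  unfolding mtrace_hermitian_sandwich[OF E psd_carrier[OF S]] Re_sum
  by (intro sum_nonneg psd_qform_nonneg[OF S])

lemma mtrace_hermitian_sandwich_eq_0_imp:
  assumes E: "hermitian d E" and S: "psd d S" and tr: "Re (mtrace (E * S * E)) = 0"
  shows "S * E = 0\<^sub>m d d"
proof -
  have Ec: "E \<in> carrier_mat d d" and Sc: "S \<in> carrier_mat d d"
    using E S by (simp_all add: hermitian_carrier psd_carrier)
  have "(\<Sum>i<d. Re (qform d S (\<lambda>k. E $$ (k,i)))) = 0"
    using tr unfolding mtrace_hermitian_sandwich[OF E Sc] Re_sum .
  hence "Re (qform d S (\<lambda>k. E $$ (k,i))) = 0" if "i < d" for i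
    using that psd_qform_nonneg[OF S] by (subst (asm) sum_nonneg_eq_0_iff) auto
  hence "(S * E) $$ (a,i) = 0" if "a < d" "i < d" for a i
    using psd_qform_eq_0_imp_apply_zero[OF S] that by (simp add: index_mult_mat_sum[OF Sc Ec])
  thus ?thesis using Sc Ec by (intro eq_matI) auto
qed

lemma squares_eq_imp_anticommute:
  fixes B C :: "complex mat"
  assumes Bc: "B \<in> carrier_mat d d" and Cc: "C \<in> carrier_mat d d" and BC: "B * B = C * C"
  shows "(B + C) * (B - C) = - ((B - C) * (B + C))"
proof (rule eq_matI)
  fix i j assume "i < dim_row (- ((B - C) * (B + C)))" "j < dim_col (- ((B - C) * (B + C)))"
  hence ij: "i < d" "j < d" using Bc Cc by auto
  have ec: "B - C \<in> carrier_mat d d" using Cc by (rule minus_carrier_mat)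
  have "((B + C) * (B - C)) $$ (i,j) + ((B - C) * (B + C)) $$ (i,j)
      = 2 * (B * B) $$ (i,j) - 2 * (C * C) $$ (i,j)"
    unfolding index_mult_mat_sum[OF add_carrier_mat[OF Cc] ec ij]
      index_mult_mat_sum[OF ec add_carrier_mat[OF Cc] ij]
      index_mult_mat_sum[OF Bc Bc ij] index_mult_mat_sum[OF Cc Cc ij]
    using ij Bc Cc by (simp add: algebra_simps sum.distrib sum_subtractf sum_distrib_left)
  thus "((B + C) * (B - C)) $$ (i,j) = (- ((B - C) * (B + C))) $$ (i,j)"
    using ij Bc Cc BC by (simp add: eq_neg_iff_add_eq_0)
qed (use Bc Cc in auto)

lemma mtrace_sandwich_anticommute_eq_0:
  assumes E: "E \<in> carrier_mat d d" and S: "S \<in> carrier_mat d d" and anti: "S * E = - (E * S)"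
  shows "mtrace (E * S * E) = 0"
proof -
  have ESE: "E * S * E \<in> carrier_mat d d" using E S by simp
  have "mtrace (E * S * E) = mtrace (E * (S * E))"
    by (simp only: assoc_mult_mat[OF E S E])
  also have "\<dots> = mtrace (S * E * E)"
    by (rule mtrace_mult_commute) (use E S in auto)
  also have "S * E * E = - (E * S * E)"
    unfolding anti by (rule uminus_mult_left_mat) (use E S in simp)
  finally show ?thesis using mtrace_uminus[OF ESE] by simp
qed

(* e = B - C anticommutes with B + C, so tr(e B e) + tr(e C e) = tr(e (B + C) e) = 0.
   Both traces are nonnegative, which forces B e = C e = 0 and hence e^2 = 0. *)
lemma psd_square_root_unique:
  assumes B: "psd d B" and C: "psd d C" and BC: "B * B = C * C"
  shows "B = C"
proof -
  have Bc: "B \<in> carrier_mat d d" and Cc: "C \<in> carrier_mat d d"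
    using B C by (simp_all add: psd_carrier)
  define e where "e = B - C"
  have e: "hermitian d e"
    unfolding e_def using B C by (intro hermitian_minus psd_hermitian)
  have ec: "e \<in> carrier_mat d d" using e by (rule hermitian_carrier)
  have "e * (B + C) * e = e * B * e + e * C * e"
    using ec Bc Cc by (simp add: mult_add_distrib_mat[OF ec Bc Cc] add_mult_distrib_mat[of _ d d _ e d])
  moreover have "mtrace (e * (B + C) * e) = 0"
    using mtrace_sandwich_anticommute_eq_0[OF ec add_carrier_mat[OF Cc]]
      squares_eq_imp_anticommute[OF Bc Cc BC] unfolding e_def by simp
  ultimately have "mtrace (e * B * e) + mtrace (e * C * e) = 0"
    using ec Bc Cc by (simp add: mtrace_add[of _ d])
  hence "Re (mtrace (e * B * e)) + Re (mtrace (e * C * e)) = 0"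
    by (metis plus_complex.sel(1) zero_complex.sel(1))
  hence "Re (mtrace (e * B * e)) = 0" "Re (mtrace (e * C * e)) = 0"
    using mtrace_hermitian_sandwich_nonneg[OF e B] mtrace_hermitian_sandwich_nonneg[OF e C] by linarith+
  hence "B * e = 0\<^sub>m d d" "C * e = 0\<^sub>m d d"
    using mtrace_hermitian_sandwich_eq_0_imp[OF e] B C by blast+
  moreover have "e * e = B * e - C * e"
    using minus_mult_distrib_mat[OF Bc Cc ec] by (simp add: e_def[symmetric])
  ultimately have "mtrace (e * e) = 0"
    unfolding mtrace_def by simp
  hence "e = 0\<^sub>m d d" by (rule hermitian_trace_mult_self_eq_0[OF e])
  thus ?thesis using minus_mat_eq_0_iff[OF Bc Cc] unfolding e_def by simp
qed

lemma msqrt_eqI: "psd d B \<Longrightarrow> B * B = A \<Longrightarrow> msqrt d A = B"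
  unfolding msqrt_def by (rule the_equality) (auto intro: psd_square_root_unique)

section \<open>The trace norm of Hermitian matrices\<close>

lemma trace_norm_hermitian:
  assumes E: "hermitian d E" and B: "psd d B" and BE: "B * B = E * E"
  shows "trace_norm d E = Re (mtrace B)"
  using E unfolding trace_norm_def hermitian_def by (simp add: msqrt_eqI[OF B BE])

lemma trace_norm_hermitian_smult:
  assumes E: "hermitian d E"
  shows "trace_norm d (of_real t \<cdot>\<^sub>m E) = \<bar>t\<bar> * trace_norm d E"
proof -
  obtain B where B: "psd d B" and BE: "B * B = E * E"
    using hermitian_square_psd_root[OF E] by blast
  have Bc: "B \<in> carrier_mat d d" and Ec: "E \<in> carrier_mat d d"
    using B E by (simp_all add: psd_carrier hermitian_carrier)
  have sq: "(k \<cdot>\<^sub>m A) * (k \<cdot>\<^sub>m A) = (k * k) \<cdot>\<^sub>m (A * A)" if "A \<in> carrier_mat d d" for k :: complex and A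
    using that by (intro eq_matI) (auto simp: index_mult_mat_sum[of _ d d _ d] sum_distrib_left ac_simps)
  have "(of_real \<bar>t\<bar> \<cdot>\<^sub>m B) * (of_real \<bar>t\<bar> \<cdot>\<^sub>m B) = (of_real t \<cdot>\<^sub>m E) * (of_real t \<cdot>\<^sub>m E)"
    unfolding sq[OF Bc] sq[OF Ec] BE by (simp flip: of_real_mult)
  hence "trace_norm d (of_real t \<cdot>\<^sub>m E) = Re (mtrace (of_real \<bar>t\<bar> \<cdot>\<^sub>m B))"
    using trace_norm_hermitian[OF hermitian_smult_real[OF E] psd_smult_nonneg[OF B]] by simp
  also have "\<dots> = \<bar>t\<bar> * trace_norm d E"
    by (simp add: mtrace_smult[OF Bc] trace_norm_hermitian[OF E B BE])
  finally show ?thesis .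
qed

lemma trace_norm_hermitian_pos:
  assumes E: "hermitian d E" and ne: "E \<noteq> 0\<^sub>m d d"
  shows "0 < trace_norm d E"
proof -
  obtain B where B: "psd d B" and BE: "B * B = E * E"
    using hermitian_square_psd_root[OF E] by blast
  have "Re (mtrace B) \<noteq> 0"
  proof
    assume "Re (mtrace B) = 0"
    hence "B = 0\<^sub>m d d" by (rule psd_trace_eq_0_imp_zero[OF B])
    hence "mtrace (E * E) = 0" unfolding BE[symmetric] mtrace_def by simp
    thus False using hermitian_trace_mult_self_eq_0[OF E] ne by blast
  qed
  thus ?thesis using trace_norm_hermitian[OF E B BE] psd_trace_nonneg[OF B] by linarith
qed

section \<open>Discrimination with complementary states\<close>

lemma povm_sum_mtrace_mult:
  assumes E: "povm d N E" and K: "K \<in> carrier_mat d d"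
  shows "(\<Sum>x<N. mtrace (E x * K)) = mtrace K"
proof -
  have Ec: "E x \<in> carrier_mat d d" if "x < N" for x
    using E that unfolding povm_def by (auto intro: psd_carrier)
  have one: "(\<Sum>x<N. E x $$ (a,b)) = (if a = b then 1 else 0)" if "a < d" "b < d" for a b
  proof -
    have "msum d E {..<N} $$ (a,b) = 1\<^sub>m d $$ (a,b)" using E unfolding povm_def by simp
    thus ?thesis unfolding msum_def using that by simp
  qed
  have "(\<Sum>x<N. mtrace (E x * K)) = (\<Sum>x<N. \<Sum>a<d. \<Sum>b<d. E x $$ (a,b) * K $$ (b,a))"
    by (rule sum.cong[OF refl]) (rule mtrace_mult[OF Ec K], simp)
  also have "\<dots> = (\<Sum>a<d. \<Sum>x<N. \<Sum>b<d. E x $$ (a,b) * K $$ (b,a))"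
    by (rule sum.swap)
  also have "\<dots> = (\<Sum>a<d. \<Sum>b<d. \<Sum>x<N. E x $$ (a,b) * K $$ (b,a))"
    by (rule sum.cong[OF refl], rule sum.swap)
  also have "\<dots> = (\<Sum>a<d. \<Sum>b<d. if b = a then K $$ (a,a) else 0)"
  proof (intro sum.cong refl)
    fix a b assume "a \<in> {..<d}" "b \<in> {..<d}"
    thus "(\<Sum>x<N. E x $$ (a,b) * K $$ (b,a)) = (if b = a then K $$ (a,a) else 0)"
      using one[of a b] by (auto simp flip: sum_distrib_right)
  qed
  also have "\<dots> = mtrace K"
    using K unfolding mtrace_def by simp
  finally show ?thesis .
qed

lemma P_guess_eqI:
  assumes le: "\<And>E. povm d N E \<Longrightarrow> (\<Sum>x<N. Re (mtrace (E x * \<rho> x)) / real N) \<le> p"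
    and M: "povm d N M" and attained: "(\<Sum>x<N. Re (mtrace (M x * \<rho> x)) / real N) = p"
  shows "P_guess d N \<rho> = p"
  unfolding P_guess_def
proof (rule cSup_eq_maximum)
  show "p \<in> {\<Sum>x<N. Re (mtrace (E x * \<rho> x)) / real N |E. povm d N E}"
    using M attained by blast
  fix z assume "z \<in> {\<Sum>x<N. Re (mtrace (E x * \<rho> x)) / real N |E. povm d N E}"
  thus "z \<le> p" using le by blast
qed

lemma density_decomposition_weight:
  assumes "density d \<rho>" "density d \<sigma>" "K = of_real c \<cdot>\<^sub>m \<rho> + of_real r \<cdot>\<^sub>m \<sigma>"
  shows "r = Re (mtrace K) - c"
  using assms unfolding density_def
  by (simp add: psd_carrier mtrace_add[of _ d] mtrace_smult[of _ d])

lemma success_probability_decomposition: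
  assumes E: "povm d N E" and K: "K \<in> carrier_mat d d"
    and \<rho>: "\<forall>x<N. \<rho> x \<in> carrier_mat d d" and \<sigma>: "\<forall>x<N. \<sigma> x \<in> carrier_mat d d"
    and K_eq: "\<forall>x<N. K = of_real (1 / real N) \<cdot>\<^sub>m \<rho> x + of_real r \<cdot>\<^sub>m \<sigma> x"
  shows "(\<Sum>x<N. Re (mtrace (E x * \<rho> x)) / real N)
    = Re (mtrace K) - r * (\<Sum>x<N. Re (mtrace (E x * \<sigma> x)))"
proof -
  have Ec: "E x \<in> carrier_mat d d" if "x < N" for x
    using E that unfolding povm_def by (auto intro: psd_carrier)
  have "mtrace (E x * K) = of_real (1 / real N) * mtrace (E x * \<rho> x) + of_real r * mtrace (E x * \<sigma> x)"
    if x: "x < N" for x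
  proof -
    have \<rho>x: "\<rho> x \<in> carrier_mat d d" and \<sigma>x: "\<sigma> x \<in> carrier_mat d d" using \<rho> \<sigma> x by auto
    have "E x * K = of_real (1 / real N) \<cdot>\<^sub>m (E x * \<rho> x) + of_real r \<cdot>\<^sub>m (E x * \<sigma> x)"
      using K_eq x \<rho>x \<sigma>x
      by (simp add: mult_add_distrib_mat[OF Ec[OF x] smult_carrier_mat[OF \<rho>x] smult_carrier_mat[OF \<sigma>x]]
          mult_smult_distrib[OF Ec[OF x] \<rho>x] mult_smult_distrib[OF Ec[OF x] \<sigma>x])
    thus ?thesis
      using Ec[OF x] \<rho>x \<sigma>x by (simp add: mtrace_add[of _ d] mtrace_smult[of _ d])
  qed
  hence "Re (mtrace K) = (\<Sum>x<N. Re (mtrace (E x * \<rho> x)) / real N + r * Re (mtrace (E x * \<sigma> x)))"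
    unfolding povm_sum_mtrace_mult[OF E K, symmetric] by (simp add: Re_sum)
  thus ?thesis by (simp add: sum.distrib sum_distrib_left)
qed

lemma P_guess_complementary:
  assumes N: "N > 0" and \<rho>: "\<forall>x<N. density d (\<rho> x)" and \<sigma>: "\<forall>x<N. density d (\<sigma> x)"
    and K_eq: "\<forall>x<N. K = of_real (1 / real N) \<cdot>\<^sub>m \<rho> x + of_real r \<cdot>\<^sub>m \<sigma> x"
    and r: "0 \<le> r" and M: "povm d N M"
    and slack: "\<forall>x<N. of_real r * mtrace (M x * \<sigma> x) = 0"
  shows "P_guess d N \<rho> = 1 / real N + r"
proof -
  have \<rho>c: "\<forall>x<N. \<rho> x \<in> carrier_mat d d" and \<sigma>c: "\<forall>x<N. \<sigma> x \<in> carrier_mat d d"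
    using \<rho> \<sigma> unfolding density_def by (auto intro: psd_carrier)
  have Kc: "K \<in> carrier_mat d d"
    using K_eq \<sigma>c N by auto
  have "r = Re (mtrace K) - 1 / real N"
    using density_decomposition_weight \<rho> \<sigma> K_eq N by blast
  hence success: "(\<Sum>x<N. Re (mtrace (E x * \<rho> x)) / real N)
      = 1 / real N + r - r * (\<Sum>x<N. Re (mtrace (E x * \<sigma> x)))" if "povm d N E" for E
    using success_probability_decomposition[OF that Kc \<rho>c \<sigma>c K_eq] by simp
  show ?thesis
  proof (rule P_guess_eqI[OF _ M])
    fix E assume E: "povm d N E"
    have "0 \<le> Re (mtrace (E x * \<sigma> x))" if "x < N" for x
      using E \<sigma> that unfolding povm_def density_def by (blast intro: mtrace_mult_psd_nonneg)
    hence "0 \<le> r * (\<Sum>x<N. Re (mtrace (E x * \<sigma> x)))"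
      using r by (auto intro!: mult_nonneg_nonneg sum_nonneg)
    thus "(\<Sum>x<N. Re (mtrace (E x * \<rho> x)) / real N) \<le> 1 / real N + r"
      unfolding success[OF E] by simp
  next
    have "r * (\<Sum>x<N. Re (mtrace (M x * \<sigma> x))) = (\<Sum>x<N. Re (of_real r * mtrace (M x * \<sigma> x)))"
      by (simp add: sum_distrib_left)
    also have "\<dots> = 0" using slack by (auto intro!: sum.neutral)
    finally show "(\<Sum>x<N. Re (mtrace (M x * \<rho> x)) / real N) = 1 / real N + r"
      unfolding success[OF M] by simp
  qed
qed

lemma smult_diff_eq_if_add_eq:
  fixes a b :: complex
  assumes "A \<in> carrier_mat d d" "A' \<in> carrier_mat d d" "B \<in> carrier_mat d d" "B' \<in> carrier_mat d d"
    and eq: "a \<cdot>\<^sub>m A + b \<cdot>\<^sub>m B = a \<cdot>\<^sub>m A' + b \<cdot>\<^sub>m B'"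
  shows "a \<cdot>\<^sub>m A - a \<cdot>\<^sub>m A' = (- b) \<cdot>\<^sub>m (B - B')"
proof (rule eq_matI)
  fix i j assume "i < dim_row ((- b) \<cdot>\<^sub>m (B - B'))" "j < dim_col ((- b) \<cdot>\<^sub>m (B - B'))"
  hence ij: "i < d" "j < d" using assms by auto
  have "(a \<cdot>\<^sub>m A + b \<cdot>\<^sub>m B) $$ (i,j) = (a \<cdot>\<^sub>m A' + b \<cdot>\<^sub>m B') $$ (i,j)" by (simp only: eq)
  hence "a * A $$ (i,j) + b * B $$ (i,j) = a * A' $$ (i,j) + b * B' $$ (i,j)"
    using assms(1-4) ij by simp
  hence "a * A $$ (i,j) - a * A' $$ (i,j) = - b * (B $$ (i,j) - B' $$ (i,j))"
    by (simp add: algebra_simps eq_diff_eq diff_eq_eq)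
  thus "(a \<cdot>\<^sub>m A - a \<cdot>\<^sub>m A') $$ (i,j) = ((- b) \<cdot>\<^sub>m (B - B')) $$ (i,j)"
    using assms ij by simp
qed (use assms in auto)

lemma trace_norm_ratio_complementary:
  assumes \<rho>: "\<rho> \<in> carrier_mat d d" "\<rho>' \<in> carrier_mat d d"
    and \<sigma>: "hermitian d \<sigma>" "hermitian d \<sigma>'"
    and eq: "of_real c \<cdot>\<^sub>m \<rho> + of_real r \<cdot>\<^sub>m \<sigma> = of_real c \<cdot>\<^sub>m \<rho>' + of_real r \<cdot>\<^sub>m \<sigma>'"
    and r: "0 \<le> r" and ne: "\<sigma> \<noteq> \<sigma>'"
  shows "r = trace_norm d (of_real c \<cdot>\<^sub>m \<rho> - of_real c \<cdot>\<^sub>m \<rho>') / trace_norm d (\<sigma> - \<sigma>')"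
proof -
  have \<sigma>c: "\<sigma> \<in> carrier_mat d d" "\<sigma>' \<in> carrier_mat d d"
    using \<sigma> by (simp_all add: hermitian_carrier)
  have herm: "hermitian d (\<sigma> - \<sigma>')" using \<sigma> by (rule hermitian_minus)
  have "of_real c \<cdot>\<^sub>m \<rho> - of_real c \<cdot>\<^sub>m \<rho>' = of_real (- r) \<cdot>\<^sub>m (\<sigma> - \<sigma>')"
    using smult_diff_eq_if_add_eq[OF \<rho> \<sigma>c eq] by simp
  hence "trace_norm d (of_real c \<cdot>\<^sub>m \<rho> - of_real c \<cdot>\<^sub>m \<rho>') = r * trace_norm d (\<sigma> - \<sigma>')"
    using trace_norm_hermitian_smult[OF herm, of "- r"] r by simp
  moreover have "\<sigma> - \<sigma>' \<noteq> 0\<^sub>m d d"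
    using ne minus_mat_eq_0_iff[OF \<sigma>c] by simp
  ultimately show ?thesis
    using trace_norm_hermitian_pos[OF herm] by simp
qed

theorem proposition3:
  fixes d N :: nat and \<rho> \<sigma> M :: "nat \<Rightarrow> complex mat" and K :: "complex mat"
    and r :: "nat \<Rightarrow> real"
  assumes "N > 0"
    and "\<forall>x<N. density d (\<rho> x)"
    and "hermitian d K"
    and "\<forall>x<N. r x \<ge> 0"
    and "\<forall>x<N. density d (\<sigma> x)"
    and "povm d N M"
    and "\<forall>x<N. K = complex_of_real (1 / real N) \<cdot>\<^sub>m \<rho> x + complex_of_real (r x) \<cdot>\<^sub>m \<sigma> x"
    and "\<forall>x<N. complex_of_real (r x) * mtrace (M x * \<sigma> x) = 0"
  shows "\<exists>r0. (\<forall>x<N. r x = r0) \<and> P_guess d N \<rho> = 1 / real N + r0 \<and>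
    (\<forall>x<N. \<forall>y<N. \<sigma> x \<noteq> \<sigma> y \<longrightarrow>
       r0 = trace_norm d (complex_of_real (1 / real N) \<cdot>\<^sub>m \<rho> x - complex_of_real (1 / real N) \<cdot>\<^sub>m \<rho> y)
            / trace_norm d (\<sigma> x - \<sigma> y))"
proof -
  note N = assms(1) and \<rho> = assms(2) and r_nonneg = assms(4) and \<sigma> = assms(5)
    and M = assms(6) and K_eq = assms(7) and slack = assms(8)
  define r0 where "r0 = Re (mtrace K) - 1 / real N"
  have r_eq: "\<forall>x<N. r x = r0"
    unfolding r0_def using \<rho> \<sigma> K_eq by (blast intro: density_decomposition_weight)
  have r0: "0 \<le> r0" using r_eq r_nonneg N by auto
  have K_eq': "\<forall>x<N. K = of_real (1 / real N) \<cdot>\<^sub>m \<rho> x + of_real r0 \<cdot>\<^sub>m \<sigma> x"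
    using K_eq r_eq by simp
  have "P_guess d N \<rho> = 1 / real N + r0"
    using P_guess_complementary[OF N \<rho> \<sigma> K_eq' r0 M] slack r_eq by simp
  moreover have "r0 = trace_norm d (of_real (1 / real N) \<cdot>\<^sub>m \<rho> x - of_real (1 / real N) \<cdot>\<^sub>m \<rho> y)
      / trace_norm d (\<sigma> x - \<sigma> y)" if "x < N" "y < N" "\<sigma> x \<noteq> \<sigma> y" for x y
    using that \<rho> \<sigma> K_eq' r0 unfolding density_def
    by (intro trace_norm_ratio_complementary) (auto intro: psd_carrier psd_hermitian)
  ultimately show ?thesis using r_eq by blast
qed

end
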